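(* Let $A$ be an infinite set, fix $z\in A$, put $A'=A\setminus\{z\}$ and let $p\in[1,\infty)$. Let $L(A)$ be Lipscomb's space (defined in the context) and let $s_p:L(A)\to l^p(A)$ be given by $s_p(\widehat{\alpha})=p_p(\alpha)$. Then $s_p$ is (well defined and) injective; equivalently, if $\alpha,\beta\in N(A)$ satisfy $p_p(\alpha)=p_p(\beta)$, then $\alpha$ and $\beta$ are equivalent.
   Context: $l^p(A)$ is the set of families $x=(x_a)_{a\in A'}$ of real numbers with $x_a=0$ for all but countably many $a$ and $\sum_a|x_a|^p<\infty$, with metric $d_p(x,y)=(\sum_a|x_a-y_a|^p)^{1/p}$. $N(A)$ is the set of all sequences $\alpha=a_1a_2a_3\ldots$ with $a_k\in A$ ($A$ discrete), with metric $d(v,v')=1/k$ where $k$ is the first index at which $v,v'$ differ, and $d(v,v)=0$. Two sequences are equivalent if they are equal or if one is $a_1\ldots a_{k-2}a_{k-1}a_ka_ka_k\ldots$ and the other is $a_1\ldots a_{k-2}a_ka_{k-1}a_{k-1}a_{k-1}\ldots$ for some $k\ge 2$ and $a_{k-1}\neq a_k$ (the prefix $a_1\ldots a_{k-2}$ may be empty); $L(A)$ is the quotient of $N(A)$ by this relation and $\widehat{\alpha}$ denotes the class of $\alpha$. The map $p_p:N(A)\to l^p(A)$ is $p_p(\alpha)=(\alpha_b)_{b\in A'}$ where, for $\alpha=a_1a_2\ldots$, $\alpha_b=\sum_{k:\,a_k=b}2^{-k}$ (and $\alpha_b=0$ if no $a_k$ equals $b$). *)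

theory Defs
  imports "HOL-Analysis.Analysis"
begin

text \<open>Sequences a_1 a_2 a_3 ... are represented 0-indexed: a_k = alpha (k - 1).\<close>

definition baire_N :: "'a set \<Rightarrow> (nat \<Rightarrow> 'a) set" where
  "baire_N A = {\<alpha>. \<forall>k. \<alpha> k \<in> A}"

definition lp_space :: "real \<Rightarrow> 'a set \<Rightarrow> ('a \<Rightarrow> real) set" where
  "lp_space p A' = {x. (\<forall>a. a \<notin> A' \<longrightarrow> x a = 0) \<and> countable {a. x a \<noteq> 0}
                      \<and> (\<lambda>a. \<bar>x a\<bar> powr p) summable_on A'}"

definition pp_map :: "'a set \<Rightarrow> 'a \<Rightarrow> (nat \<Rightarrow> 'a) \<Rightarrow> ('a \<Rightarrow> real)" where
  "pp_map A z \<alpha> = (\<lambda>b. if b \<in> A - {z}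
       then (\<Sum>i. if \<alpha> i = b then (1/2::real) ^ Suc i else 0) else 0)"

text \<open>alpha = a_1..a_{k-2} c d d d ..., beta = a_1..a_{k-2} d c c c ..., c ~= d, k >= 2;
  here m = k - 2 is the length of the common prefix.\<close>
definition lip_rel :: "(nat \<Rightarrow> 'a) \<Rightarrow> (nat \<Rightarrow> 'a) \<Rightarrow> bool" where
  "lip_rel \<alpha> \<beta> \<longleftrightarrow> (\<exists>m c d. c \<noteq> d \<and> (\<forall>i<m. \<alpha> i = \<beta> i)
      \<and> \<alpha> m = c \<and> (\<forall>j>m. \<alpha> j = d) \<and> \<beta> m = d \<and> (\<forall>j>m. \<beta> j = c))"

definition lip_equiv :: "(nat \<Rightarrow> 'a) \<Rightarrow> (nat \<Rightarrow> 'a) \<Rightarrow> bool" where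
  "lip_equiv \<alpha> \<beta> \<longleftrightarrow> \<alpha> = \<beta> \<or> lip_rel \<alpha> \<beta> \<or> lip_rel \<beta> \<alpha>"

end

theory Submission
  imports Defs
begin

text \<open>The coordinate \<open>\<alpha>\<^sub>b\<close> is the binary number \<open>0.e\<^sub>1e\<^sub>2\<dots>\<close> with \<open>e\<^sub>k = 1\<close> iff \<open>a\<^sub>k = b\<close>.
  Such a number is \<open>0\<close> only for the empty pattern and \<open>1\<close> only for the full one, and the
  only coincidences \<open>0.w1000\<dots> = 0.w0111\<dots>\<close> are the dyadic ones. So if \<open>\<alpha>\<close> and \<open>\<beta>\<close> first
  differ at position \<open>m\<close>, with \<open>\<alpha>\<^sub>m = c\<close>, \<open>\<beta>\<^sub>m = d \<noteq> z\<close>, equality of the \<open>d\<close>-coordinates forces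
  the tail of \<open>\<alpha>\<close> to be constantly \<open>d\<close> and the tail of \<open>\<beta>\<close> to avoid \<open>d\<close>; comparing the
  remaining coordinates then forces the tail of \<open>\<beta>\<close> to be constantly \<open>c\<close>. Coordinates lie
  in \<open>[0,1]\<close> and the coordinates of finitely many letters sum to at most \<open>1\<close>, which gives
  membership in \<open>l\<^sup>p\<close> for \<open>p \<ge> 1\<close>.\<close>

definition dyadic_mass :: "(nat \<Rightarrow> bool) \<Rightarrow> real" where
  "dyadic_mass P = (\<Sum>i. if P i then (1/2) ^ Suc i else 0)"

lemma summable_dyadic_terms: "summable (\<lambda>i. if P i then (1/2::real) ^ Suc i else 0)"
  by (rule summable_comparison_test[OF _ sums_summable[OF power_half_series]]) auto

lemma dyadic_mass_const [simp]: "dyadic_mass (\<lambda>i. Q) = of_bool Q"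
  using sums_unique[OF power_half_series] by (simp add: dyadic_mass_def)

lemma dyadic_mass_nonneg: "0 \<le> dyadic_mass P"
  unfolding dyadic_mass_def by (rule suminf_nonneg[OF summable_dyadic_terms]) auto

lemma dyadic_mass_add_compl: "dyadic_mass P + dyadic_mass (\<lambda>i. \<not> P i) = 1"
proof -
  have "dyadic_mass P + dyadic_mass (\<lambda>i. \<not> P i) = dyadic_mass (\<lambda>i. True)"
    unfolding dyadic_mass_def
    by (subst suminf_add[OF summable_dyadic_terms summable_dyadic_terms])
       (auto intro!: arg_cong[where f = suminf])
  then show ?thesis by simp
qed

lemma dyadic_mass_le_1: "dyadic_mass P \<le> 1"
  using dyadic_mass_add_compl[of P] dyadic_mass_nonneg[of "\<lambda>i. \<not> P i"] by linarith

lemma dyadic_mass_eq_0_iff: "dyadic_mass P = 0 \<longleftrightarrow> (\<forall>i. \<not> P i)"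
proof
  assume mass: "dyadic_mass P = 0"
  show "\<forall>i. \<not> P i"
  proof (intro allI notI)
    fix k assume "P k"
    have "0 < dyadic_mass P" unfolding dyadic_mass_def
      by (rule suminf_pos2[OF summable_dyadic_terms, where i = k]) (use \<open>P k\<close> in auto)
    with mass show False by simp
  qed
qed (simp add: dyadic_mass_def)

lemma dyadic_mass_eq_1_iff: "dyadic_mass P = 1 \<longleftrightarrow> (\<forall>i. P i)"
  using dyadic_mass_add_compl[of P] dyadic_mass_eq_0_iff[of "\<lambda>i. \<not> P i"] by auto

lemma dyadic_mass_split:
  "dyadic_mass P = (\<Sum>i<m. if P i then (1/2) ^ Suc i else 0)
     + (1/2) ^ Suc m * (of_bool (P m) + dyadic_mass (\<lambda>i. P (Suc m + i)))"
proof -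
  let ?f = "\<lambda>i. if P i then (1/2::real) ^ Suc i else 0"
  have "(\<Sum>i. ?f (i + Suc m)) = (\<Sum>i. (1/2) ^ Suc m * (if P (Suc m + i) then (1/2) ^ Suc i else 0))"
    by (rule arg_cong[where f = suminf]) (auto simp: power_add add.commute)
  also have "\<dots> = (1/2) ^ Suc m * dyadic_mass (\<lambda>i. P (Suc m + i))"
    unfolding dyadic_mass_def by (rule suminf_mult[OF summable_dyadic_terms])
  finally show ?thesis
    using suminf_split_initial_segment[OF summable_dyadic_terms, of P "Suc m"]
    by (simp add: dyadic_mass_def algebra_simps)
qed

lemma dyadic_mass_eq_iff_tail:
  assumes "\<forall>i<m. P i = Q i"
  shows "dyadic_mass P = dyadic_mass Q \<longleftrightarrow>
    of_bool (P m) + dyadic_mass (\<lambda>i. P (Suc m + i)) = of_bool (Q m) + dyadic_mass (\<lambda>i. Q (Suc m + i))"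
proof -
  have "(\<Sum>i<m. if P i then (1/2::real) ^ Suc i else 0) = (\<Sum>i<m. if Q i then (1/2) ^ Suc i else 0)"
    using assms by (intro sum.cong) auto
  then show ?thesis by (simp add: dyadic_mass_split[of P m] dyadic_mass_split[of Q m])
qed

lemma sum_dyadic_mass_letters:
  assumes "finite F"
  shows "(\<Sum>b\<in>F. dyadic_mass (\<lambda>i. \<alpha> i = b)) = dyadic_mass (\<lambda>i. \<alpha> i \<in> F)"
proof -
  have "(\<Sum>b\<in>F. dyadic_mass (\<lambda>i. \<alpha> i = b))
      = (\<Sum>i. \<Sum>b\<in>F. if \<alpha> i = b then (1/2::real) ^ Suc i else 0)"
    unfolding dyadic_mass_def by (rule suminf_sum[symmetric]) (rule summable_dyadic_terms)
  also have "\<dots> = dyadic_mass (\<lambda>i. \<alpha> i \<in> F)"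
    unfolding dyadic_mass_def using assms by (simp)
  finally show ?thesis .
qed

lemma lip_rel_dyadic_mass_eq:
  assumes "lip_rel \<alpha> \<beta>"
  shows "dyadic_mass (\<lambda>i. \<alpha> i = b) = dyadic_mass (\<lambda>i. \<beta> i = b)"
proof -
  obtain m c d where "c \<noteq> d" "\<forall>i<m. \<alpha> i = \<beta> i" "\<alpha> m = c" "\<forall>j>m. \<alpha> j = d"
    "\<beta> m = d" "\<forall>j>m. \<beta> j = c"
    using assms unfolding lip_rel_def by blast
  then show ?thesis
    by (subst dyadic_mass_eq_iff_tail[where m = m]) auto
qed

lemma lip_rel_of_dyadic_mass_eq:
  assumes mass_eq: "\<And>b. b \<noteq> z \<Longrightarrow> dyadic_mass (\<lambda>i. \<alpha> i = b) = dyadic_mass (\<lambda>i. \<beta> i = b)"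
    and prefix: "\<forall>i<m. \<alpha> i = \<beta> i" and differ: "\<alpha> m \<noteq> \<beta> m" and visible: "\<beta> m \<noteq> z"
  shows "lip_rel \<alpha> \<beta>"
proof -
  define c d where "c = \<alpha> m" and "d = \<beta> m"
  define T\<alpha> T\<beta> where "T\<alpha> b = dyadic_mass (\<lambda>i. \<alpha> (Suc m + i) = b)"
    and "T\<beta> b = dyadic_mass (\<lambda>i. \<beta> (Suc m + i) = b)" for b
  have tails: "of_bool (c = b) + T\<alpha> b = of_bool (d = b) + T\<beta> b" if "b \<noteq> z" for b
    using mass_eq[OF that] dyadic_mass_eq_iff_tail[of m "\<lambda>i. \<alpha> i = b" "\<lambda>i. \<beta> i = b"] prefix
    by (simp add: c_def d_def T\<alpha>_def T\<beta>_def)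
  have bounds: "0 \<le> T\<alpha> b" "T\<alpha> b \<le> 1" "0 \<le> T\<beta> b" "T\<beta> b \<le> 1" for b
    by (simp_all add: T\<alpha>_def T\<beta>_def dyadic_mass_nonneg dyadic_mass_le_1)
  have "T\<alpha> d = 1 + T\<beta> d"
    using tails[of d] differ visible by (simp add: c_def d_def)
  then have mass_d: "T\<alpha> d = 1" "T\<beta> d = 0"
    using bounds[of d] by linarith+
  have \<alpha>_tail: "\<alpha> j = d" and \<beta>_tail_avoids_d: "\<beta> j \<noteq> d" if "m < j" for j
  proof -
    obtain i where "j = Suc m + i"
      using \<open>m < j\<close> less_iff_Suc_add by auto
    then show "\<alpha> j = d" "\<beta> j \<noteq> d"
      using mass_d by (simp_all add: T\<alpha>_def T\<beta>_def dyadic_mass_eq_1_iff dyadic_mass_eq_0_iff)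
  qed
  have \<beta>_tail: "\<beta> j = c" if "m < j" for j
  proof (rule ccontr)
    obtain i where j: "j = Suc m + i"
      using \<open>m < j\<close> less_iff_Suc_add by auto
    assume "\<beta> j \<noteq> c"
    show False
    proof (cases "\<beta> j = z")
      case False
      have "d \<noteq> \<beta> j"
        using \<beta>_tail_avoids_d[OF \<open>m < j\<close>] by simp
      then have "T\<alpha> (\<beta> j) = 0"
        using \<alpha>_tail by (simp add: T\<alpha>_def dyadic_mass_eq_0_iff)
      then have "T\<beta> (\<beta> j) = 0"
        using tails[OF False] \<open>\<beta> j \<noteq> c\<close> \<open>d \<noteq> \<beta> j\<close> by simp
      then show False
        unfolding T\<beta>_def dyadic_mass_eq_0_iff using j by blast
    next
      case True
      \<comment> \<open>now \<open>c \<noteq> z\<close>, so the \<open>c\<close>-coordinates are compared\<close>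
      have "1 + T\<alpha> c = T\<beta> c"
        using tails[of c] True \<open>\<beta> j \<noteq> c\<close> differ by (simp add: c_def d_def)
      then have "T\<beta> c = 1"
        using bounds[of c] by linarith
      then show False
        unfolding T\<beta>_def dyadic_mass_eq_1_iff using j \<open>\<beta> j \<noteq> c\<close> by blast
    qed
  qed
  show ?thesis
    unfolding lip_rel_def
    using prefix differ \<alpha>_tail \<beta>_tail by (auto simp: c_def d_def)
qed

lemma dyadic_mass_eq_iff_lip_equiv:
  "(\<forall>b. b \<noteq> z \<longrightarrow> dyadic_mass (\<lambda>i. \<alpha> i = b) = dyadic_mass (\<lambda>i. \<beta> i = b))
     \<longleftrightarrow> lip_equiv \<alpha> \<beta>"
proof
  assume mass_eq: "\<forall>b. b \<noteq> z \<longrightarrow> dyadic_mass (\<lambda>i. \<alpha> i = b) = dyadic_mass (\<lambda>i. \<beta> i = b)"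
  show "lip_equiv \<alpha> \<beta>"
  proof (cases "\<alpha> = \<beta>")
    case False
    then obtain m where differ: "\<alpha> m \<noteq> \<beta> m" and prefix: "\<forall>i<m. \<alpha> i = \<beta> i"
      using exists_least_iff[of "\<lambda>n. \<alpha> n \<noteq> \<beta> n"] by blast
    consider "\<beta> m \<noteq> z" | "\<alpha> m \<noteq> z"
      using differ by blast
    then show ?thesis
    proof cases
      case 1
      have "lip_rel \<alpha> \<beta>"
        by (rule lip_rel_of_dyadic_mass_eq[of z, OF _ prefix differ 1]) (use mass_eq in blast)
      then show ?thesis by (simp add: lip_equiv_def)
    next
      case 2
      have "lip_rel \<beta> \<alpha>"
        by (rule lip_rel_of_dyadic_mass_eq[of z]) (use mass_eq prefix differ 2 in auto)
      then show ?thesis by (simp add: lip_equiv_def)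
    qed
  qed (simp add: lip_equiv_def)
next
  assume "lip_equiv \<alpha> \<beta>"
  then show "\<forall>b. b \<noteq> z \<longrightarrow> dyadic_mass (\<lambda>i. \<alpha> i = b) = dyadic_mass (\<lambda>i. \<beta> i = b)"
    unfolding lip_equiv_def using lip_rel_dyadic_mass_eq by fastforce
qed

lemma pp_map_apply:
  "pp_map A z \<alpha> b = (if b \<in> A - {z} then dyadic_mass (\<lambda>i. \<alpha> i = b) else 0)"
  by (simp add: pp_map_def dyadic_mass_def)

lemma pp_map_eq_iff_lip_equiv:
  assumes "\<alpha> \<in> baire_N A" "\<beta> \<in> baire_N A"
  shows "pp_map A z \<alpha> = pp_map A z \<beta> \<longleftrightarrow> lip_equiv \<alpha> \<beta>"
proof -
  have outside_A: "dyadic_mass (\<lambda>i. \<alpha> i = b) = dyadic_mass (\<lambda>i. \<beta> i = b)" if "b \<notin> A" for b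
  proof -
    have "\<forall>i. \<alpha> i \<noteq> b" "\<forall>i. \<beta> i \<noteq> b"
      using assms that by (auto simp: baire_N_def)
    then show ?thesis by simp
  qed
  have "pp_map A z \<alpha> = pp_map A z \<beta> \<longleftrightarrow>
      (\<forall>b\<in>A - {z}. dyadic_mass (\<lambda>i. \<alpha> i = b) = dyadic_mass (\<lambda>i. \<beta> i = b))"
    unfolding fun_eq_iff pp_map_apply by auto
  also have "\<dots> \<longleftrightarrow> (\<forall>b. b \<noteq> z \<longrightarrow> dyadic_mass (\<lambda>i. \<alpha> i = b) = dyadic_mass (\<lambda>i. \<beta> i = b))"
    using outside_A by auto
  also have "\<dots> \<longleftrightarrow> lip_equiv \<alpha> \<beta>"
    by (rule dyadic_mass_eq_iff_lip_equiv)
  finally show ?thesis .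
qed

lemma pp_map_in_lp_space:
  assumes "1 \<le> p"
  shows "pp_map A z \<alpha> \<in> lp_space p (A - {z})"
proof -
  let ?x = "pp_map A z \<alpha>"
  have x_bounds: "0 \<le> ?x b" "?x b \<le> 1" for b
    by (simp_all add: pp_map_apply dyadic_mass_nonneg dyadic_mass_le_1)
  have "{b. ?x b \<noteq> 0} \<subseteq> range \<alpha>"
    by (auto simp: pp_map_apply dyadic_mass_eq_0_iff)
  then have support: "countable {b. ?x b \<noteq> 0}"
    by (rule countable_subset) simp
  have "sum (\<lambda>b. \<bar>?x b\<bar> powr p) F \<le> 1" if "finite F" for F
  proof -
    have "?x b powr p \<le> ?x b" for b
      using powr_mono'[OF assms x_bounds[of b]] x_bounds(1)[of b] by simp
    then have "sum (\<lambda>b. \<bar>?x b\<bar> powr p) F \<le> sum ?x F"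
      using x_bounds by (intro sum_mono) simp
    also have "\<dots> \<le> sum (\<lambda>b. dyadic_mass (\<lambda>i. \<alpha> i = b)) F"
      by (intro sum_mono) (simp add: pp_map_apply dyadic_mass_nonneg)
    also have "\<dots> \<le> 1"
      using that by (simp add: sum_dyadic_mass_letters dyadic_mass_le_1)
    finally show ?thesis .
  qed
  then have "(\<lambda>b. \<bar>?x b\<bar> powr p) summable_on (A - {z})"
    by (intro nonneg_bdd_above_summable_on bdd_aboveI2) auto
  then show ?thesis
    using support by (simp add: lp_space_def pp_map_apply)
qed

theorem proposition2p1:
  fixes A :: "'a set" and z :: 'a and p :: real
  assumes "infinite A" and "z \<in> A" and "1 \<le> p"
  shows "(\<forall>\<alpha>\<in>baire_N A. pp_map A z \<alpha> \<in> lp_space p (A - {z}))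
       \<and> (\<forall>\<alpha>\<in>baire_N A. \<forall>\<beta>\<in>baire_N A.
            pp_map A z \<alpha> = pp_map A z \<beta> \<longleftrightarrow> lip_equiv \<alpha> \<beta>)"
  using \<open>1 \<le> p\<close> by (simp add: pp_map_in_lp_space pp_map_eq_iff_lip_equiv)

end
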